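(* For every $n\ge1$, $$\mathrm{SH}_n=\sum_{\substack{\lambda\vdash n\\ \text{all parts odd}}}\frac{2^{\ell}}{\ell!}\cdot\frac{\ell!}{m_1!\,m_3!\,m_5!\cdots}\cdot\prod_{j=0}^{\ell-2}(n+\ell-1-2j)\;V_\lambda,$$ where $\ell=\ell(\lambda)$ is the number of parts of $\lambda$, $m_i$ is the number of parts equal to $i$, the product $\prod_{j=0}^{\ell-2}(n+\ell-1-2j)=(n+\ell-1)(n+\ell-3)\cdots(n-\ell+3)$ is empty (equal to $1$) when $\ell=1$, and $V_\lambda=P_{\lambda_1}P_{\lambda_2}\cdots$.
   Context: Work in the ring $\Lambda_{\mathbb Q}$ of symmetric functions with rational coefficients in variables $x=(x_1,x_2,\dots)$; $p_k$ denotes the power sum. For $f\in\Lambda_{\mathbb Q}$, its shiftification $f(x/x)$ is obtained by writing $f$ as a polynomial in the power sums and substituting $p_{2i+1}\mapsto 2p_{2i+1}$ and $p_{2i}\mapsto 0$ for all $i\ge1$. A parking function of length $n$ is a sequence $(a_1,\dots,a_n)$ of positive integers whose weakly increasing rearrangement $b_1\le\cdots\le b_n$ satisfies $b_i\le i$ for all $i$. The symmetric group $S_n$ acts on the set of parking functions of length $n$ by permuting coordinates; $\mathrm{PF}_n$ denotes the Frobenius characteristic of this permutation representation ($\mathrm{PF}_0=1$). Define $\mathrm{SH}_n(x)=\mathrm{PF}_n(x/x)$. The one-row Schur $P$-functions $P_n$ are defined by $1+2\sum_{n\ge1}P_n(x)t^n=\prod_i\frac{1+x_it}{1-x_it}$.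 For any partition $\lambda$, $V_\lambda=P_{\lambda_1}P_{\lambda_2}\cdots$. (The $P_{2i+1}$, $i\ge0$, are algebraically independent and generate $\Gamma=\mathbb Q[p_1,p_3,p_5,\dots]$, so this expansion is unique.) *)

theory Defs
  imports Complex_Main "HOL-Library.Multiset" "HOL-Combinatorics.Permutations"
    "HOL-Combinatorics.Orbits" "HOL-Computational_Algebra.Formal_Power_Series"
begin

text \<open>Symmetric functions are evaluated at finitely many real variables
  x 0, ..., x (N-1); an identity in the ring of symmetric functions holds iff it
  holds for all such evaluations (all N, all real x).\<close>

definition power_sum :: "nat \<Rightarrow> nat \<Rightarrow> (nat \<Rightarrow> real) \<Rightarrow> real" where
  "power_sum N k x = (\<Sum>i<N. x i ^ k)"

definition parking_functions :: "nat \<Rightarrow> nat list set" where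
  "parking_functions n = {a. length a = n \<and> (\<forall>i<n. a ! i \<ge> 1) \<and>
      (\<forall>i<n. sort a ! i \<le> i + 1)}"

definition fixed_pfs :: "nat \<Rightarrow> (nat \<Rightarrow> nat) \<Rightarrow> nat list set" where
  "fixed_pfs n \<sigma> = {a \<in> parking_functions n. \<forall>i<n. a ! (\<sigma> i) = a ! i}"

definition cycles_of :: "nat \<Rightarrow> (nat \<Rightarrow> nat) \<Rightarrow> nat set set" where
  "cycles_of n \<sigma> = (\<lambda>i. orbit \<sigma> i) ` {..<n}"

text \<open>Frobenius characteristic of the permutation representation on parking
  functions: (1/n!) sum over sigma of (number of fixed points) times p_(cycle type).
  Shiftification replaces p_k by 2 p_k (k odd) and 0 (k even).\<close>
definition shift_ps :: "nat \<Rightarrow> nat \<Rightarrow> (nat \<Rightarrow> real) \<Rightarrow> real" where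
  "shift_ps N k x = (if odd k then 2 * power_sum N k x else 0)"

definition PF :: "nat \<Rightarrow> nat \<Rightarrow> (nat \<Rightarrow> real) \<Rightarrow> real" where
  "PF n N x = (1 / fact n) * (\<Sum>\<sigma> | \<sigma> permutes {..<n}.
      real (card (fixed_pfs n \<sigma>)) * (\<Prod>c\<in>cycles_of n \<sigma>. power_sum N (card c) x))"

definition SH :: "nat \<Rightarrow> nat \<Rightarrow> (nat \<Rightarrow> real) \<Rightarrow> real" where
  "SH n N x = (1 / fact n) * (\<Sum>\<sigma> | \<sigma> permutes {..<n}.
      real (card (fixed_pfs n \<sigma>)) * (\<Prod>c\<in>cycles_of n \<sigma>. shift_ps N (card c) x))"

text \<open>One-row Schur P-functions: 1 + 2 sum P_n t^n = prod_i (1 + x_i t)/(1 - x_i t).\<close>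
definition schurP_gf :: "nat \<Rightarrow> (nat \<Rightarrow> real) \<Rightarrow> real fps" where
  "schurP_gf N x = (\<Prod>i<N. (1 + fps_const (x i) * fps_X) * inverse (1 - fps_const (x i) * fps_X))"

definition schurP :: "nat \<Rightarrow> nat \<Rightarrow> (nat \<Rightarrow> real) \<Rightarrow> real" where
  "schurP n N x = fps_nth (schurP_gf N x) n / 2"

definition V :: "nat multiset \<Rightarrow> nat \<Rightarrow> (nat \<Rightarrow> real) \<Rightarrow> real" where
  "V mu N x = (\<Prod>k\<in>#mu. schurP k N x)"

definition odd_partitions :: "nat \<Rightarrow> nat multiset set" where
  "odd_partitions n = {mu. (\<forall>k\<in>#mu. odd k) \<and> sum_mset mu = n}"

end

theory Submission
  imports Defs "HOL-Combinatorics.Multiset_Permutations"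
begin

text \<open>By Pollak's cyclic-shift argument a permutation with \<open>c\<close> cycles fixes \<open>(n+1)\<^sup>c\<^sup>-\<^sup>1\<close>
  parking functions, so the exponential formula turns \<open>SH\<^sub>n\<close> into \<open>[t\<^sup>n] Q\<^sup>n\<^sup>+\<^sup>1 / (n+1)\<close>, where
  \<open>Q = \<Prod>(1 + x\<^sub>i t)/(1 - x\<^sub>i t) = 1 + 2 \<Sum>P\<^sub>k t\<^sup>k\<close>; its logarithmic derivative is the series of
  shiftified power sums. As \<open>Q(t) Q(-t) = 1\<close>, \<open>Q = exp (arsinh S)\<close> for the odd part \<open>S\<close> of \<open>Q\<close>,
  so \<open>Q\<^sup>n\<^sup>+\<^sup>1 = exp ((n+1) arsinh S)\<close>. The coefficients of \<open>exp (M arsinh t)\<close> follow from the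
  equation \<open>(1 + t\<^sup>2) y'' + t y' = M\<^sup>2 y\<close>, and the coefficients of the powers of \<open>S\<close> are sums
  over compositions of \<open>n\<close> into odd parts, which group into odd partitions.\<close>

unbundle fps_syntax

section \<open>The exponential formula for sums over permutations\<close>

definition cycle_product_sum :: "('a set \<Rightarrow> 'b::comm_semiring_1) \<Rightarrow> 'a set \<Rightarrow> 'b" where
  "cycle_product_sum g A = (\<Sum>\<sigma> | \<sigma> permutes A. \<Prod>c \<in> orbit \<sigma> ` A. g c)"

definition cyclic_perms :: "'a set \<Rightarrow> ('a \<Rightarrow> 'a) set" where
  "cyclic_perms C = {\<tau>. \<tau> permutes C \<and> cyclic_on \<tau> C}"

definition glue_on :: "'a set \<Rightarrow> ('a \<Rightarrow> 'a) \<Rightarrow> ('a \<Rightarrow> 'a) \<Rightarrow> 'a \<Rightarrow> 'a" where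
  "glue_on C \<tau> \<rho> x = (if x \<in> C then \<tau> x else \<rho> x)"

lemma finite_cyclic_perms: "finite C \<Longrightarrow> finite (cyclic_perms C)"
  unfolding cyclic_perms_def by (rule finite_subset[OF _ finite_permutations]) auto

lemma perm_restrict_cyclic_permutes:
  assumes "\<sigma> permutes A" "cyclic_on \<sigma> C" "C \<subseteq> A"
  shows "perm_restrict \<sigma> C permutes C"
proof -
  have inC: "\<sigma> x \<in> C \<longleftrightarrow> x \<in> C" for x
    using assms cyclic_on_f_in cyclic_on_inI by metis
  have inj: "\<sigma> x = \<sigma> y \<Longrightarrow> x = y" for x y
    using assms(1) by (metis permutes_inj injD)
  have surj: "\<exists>x. \<sigma> x = y" for y
    using assms(1) by (metis permutes_surj surjD)
  show ?thesis
    unfolding permutes_def perm_restrict_def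
  proof (intro conjI allI impI)
    fix y
    show "\<exists>!x. (if x \<in> C then \<sigma> x else x) = y"
    proof (cases "y \<in> C")
      case True
      then obtain x where "\<sigma> x = y" using surj by blast
      then show ?thesis using True inC inj by metis
    qed (use inC in metis)
  qed auto
qed

lemma orbit_glue_on_cyclic:
  assumes "\<tau> \<in> cyclic_perms C" "x \<in> C"
  shows "orbit (glue_on C \<tau> \<rho>) x = C"
proof -
  have "orbit (glue_on C \<tau> \<rho>) x = orbit \<tau> x"
    using assms by (intro orbit_cong0) (auto simp: glue_on_def cyclic_perms_def permutes_in_image)
  also have "\<dots> = C" using assms by (intro orbit_cyclic_eq3) (auto simp: cyclic_perms_def)
  finally show ?thesis .
qed

lemma orbit_glue_on_outside:
  assumes "\<rho> permutes B" "C \<inter> B = {}" "x \<in> B"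
  shows "orbit (glue_on C \<tau> \<rho>) x = orbit \<rho> x"
  using assms by (intro orbit_cong0) (auto simp: glue_on_def permutes_in_image)

lemma glue_on_permutes:
  assumes "\<tau> permutes C" "\<rho> permutes A - C" "C \<subseteq> A"
  shows "glue_on C \<tau> \<rho> permutes A"
proof -
  have "glue_on C \<tau> \<rho> = \<tau> \<circ> \<rho>"
  proof
    fix x
    show "glue_on C \<tau> \<rho> x = (\<tau> \<circ> \<rho>) x"
    proof (cases "x \<in> C")
      case False
      then have "\<rho> x \<notin> C"
        using assms(2) permutes_in_image[OF assms(2), of x] by (cases "x \<in> A") (auto simp: permutes_not_in)
      then show ?thesis using False assms(1) by (simp add: glue_on_def permutes_not_in)
    qed (use assms(2) in \<open>simp add: glue_on_def permutes_not_in\<close>)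
  qed
  then show ?thesis
    using assms by (metis Diff_subset permutes_compose permutes_subset)
qed

lemma cycle_orbits_glue_on:
  assumes "\<tau> \<in> cyclic_perms C" "\<rho> permutes A - C" "a \<in> C" "C \<subseteq> A"
  shows "orbit (glue_on C \<tau> \<rho>) ` A = insert C (orbit \<rho> ` (A - C))"
proof -
  have "orbit (glue_on C \<tau> \<rho>) ` A = orbit (glue_on C \<tau> \<rho>) ` C \<union> orbit (glue_on C \<tau> \<rho>) ` (A - C)"
    using assms(4) by (metis Un_Diff_cancel image_Un sup.absorb2)
  also have "orbit (glue_on C \<tau> \<rho>) ` C = {C}"
    using orbit_glue_on_cyclic[OF assms(1)] assms(3) by auto
  also have "orbit (glue_on C \<tau> \<rho>) ` (A - C) = orbit \<rho> ` (A - C)"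
    using orbit_glue_on_outside[OF assms(2)] by auto
  finally show ?thesis by simp
qed

lemma bij_betw_glue_on_cycle:
  assumes "finite A" "a \<in> A"
  shows "bij_betw (\<lambda>(C, \<tau>, \<rho>). glue_on C \<tau> \<rho>)
           (SIGMA C:{C. C \<subseteq> A \<and> a \<in> C}. cyclic_perms C \<times> {\<rho>. \<rho> permutes A - C})
           {\<sigma>. \<sigma> permutes A}"
proof (rule bij_betw_byWitness[where f' = "\<lambda>\<sigma>. (orbit \<sigma> a, perm_restrict \<sigma> (orbit \<sigma> a),
                                                perm_restrict \<sigma> (A - orbit \<sigma> a))"])
  show "\<forall>p \<in> (SIGMA C:{C. C \<subseteq> A \<and> a \<in> C}. cyclic_perms C \<times> {\<rho>. \<rho> permutes A - C}).
          (\<lambda>\<sigma>. (orbit \<sigma> a, perm_restrict \<sigma> (orbit \<sigma> a), perm_restrict \<sigma> (A - orbit \<sigma> a)))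
            ((\<lambda>(C, \<tau>, \<rho>). glue_on C \<tau> \<rho>) p) = p"
  proof clarsimp
    fix C \<tau> \<rho> assume C: "C \<subseteq> A" "a \<in> C" and \<tau>: "\<tau> \<in> cyclic_perms C" and \<rho>: "\<rho> permutes A - C"
    have orb: "orbit (glue_on C \<tau> \<rho>) a = C" by (rule orbit_glue_on_cyclic[OF \<tau> C(2)])
    have "perm_restrict (glue_on C \<tau> \<rho>) C = \<tau>"
      using \<tau> by (auto simp: fun_eq_iff perm_restrict_def glue_on_def cyclic_perms_def permutes_not_in)
    moreover have "perm_restrict (glue_on C \<tau> \<rho>) (A - C) = \<rho>"
      using \<rho> by (auto simp: fun_eq_iff perm_restrict_def glue_on_def permutes_not_in)
    ultimately show "orbit (glue_on C \<tau> \<rho>) a = C \<and>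
        perm_restrict (glue_on C \<tau> \<rho>) (orbit (glue_on C \<tau> \<rho>) a) = \<tau> \<and>
        perm_restrict (glue_on C \<tau> \<rho>) (A - orbit (glue_on C \<tau> \<rho>) a) = \<rho>"
      by (simp add: orb)
  qed
next
  show "\<forall>\<sigma> \<in> {\<sigma>. \<sigma> permutes A}. (\<lambda>(C, \<tau>, \<rho>). glue_on C \<tau> \<rho>)
          (orbit \<sigma> a, perm_restrict \<sigma> (orbit \<sigma> a), perm_restrict \<sigma> (A - orbit \<sigma> a)) = \<sigma>"
    by (auto simp: fun_eq_iff glue_on_def perm_restrict_def permutes_not_in)
next
  show "(\<lambda>(C, \<tau>, \<rho>). glue_on C \<tau> \<rho>) ` (SIGMA C:{C. C \<subseteq> A \<and> a \<in> C}. cyclic_perms C \<times> {\<rho>. \<rho> permutes A - C})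
          \<subseteq> {\<sigma>. \<sigma> permutes A}"
    by (auto simp: cyclic_perms_def intro: glue_on_permutes)
next
  show "(\<lambda>\<sigma>. (orbit \<sigma> a, perm_restrict \<sigma> (orbit \<sigma> a), perm_restrict \<sigma> (A - orbit \<sigma> a))) ` {\<sigma>. \<sigma> permutes A}
          \<subseteq> (SIGMA C:{C. C \<subseteq> A \<and> a \<in> C}. cyclic_perms C \<times> {\<rho>. \<rho> permutes A - C})"
  proof clarsimp
    fix \<sigma> assume \<sigma>: "\<sigma> permutes A"
    have cyc: "cyclic_on \<sigma> (orbit \<sigma> a)" using cyclic_on_orbit[OF \<sigma> assms(1)] .
    show "orbit \<sigma> a \<subseteq> A \<and> a \<in> orbit \<sigma> a \<and> perm_restrict \<sigma> (orbit \<sigma> a) \<in> cyclic_perms (orbit \<sigma> a) \<and>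
          perm_restrict \<sigma> (A - orbit \<sigma> a) permutes A - orbit \<sigma> a"
      using permutes_orbit_subset[OF \<sigma> assms(2)] permutation_self_in_orbit[of \<sigma> a]
        perm_restrict_cyclic_permutes[OF \<sigma> cyc] perm_restrict_diff_cyclic[OF \<sigma> cyc] \<sigma> assms
      by (auto simp: cyclic_perms_def cyclic_on_perm_restrict cyc permutation_permutes)
  qed
qed

lemma cycle_product_sum_split_cycle:
  assumes A: "finite A" "a \<in> A"
  shows "cycle_product_sum g A =
    (\<Sum>C | C \<subseteq> A \<and> a \<in> C. of_nat (card (cyclic_perms C)) * g C * cycle_product_sum g (A - C))"
proof -
  define S where "S = {C. C \<subseteq> A \<and> a \<in> C}"
  have finS: "finite S" using A by (auto simp: S_def)
  have fin_fibre: "finite (cyclic_perms C \<times> {\<rho>. \<rho> permutes A - C})" if "C \<in> S" for C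
    using that A by (auto simp: S_def intro: finite_subset finite_cyclic_perms finite_permutations)
  have prod_glue: "(\<Prod>c \<in> orbit (glue_on C \<tau> \<rho>) ` A. g c) = g C * (\<Prod>c \<in> orbit \<rho> ` (A - C). g c)"
    if "C \<in> S" "\<tau> \<in> cyclic_perms C" "\<rho> permutes A - C" for C \<tau> \<rho>
  proof -
    have "orbit (glue_on C \<tau> \<rho>) ` A = insert C (orbit \<rho> ` (A - C))"
      using that by (intro cycle_orbits_glue_on) (auto simp: S_def)
    moreover have "C \<notin> orbit \<rho> ` (A - C)"
      using that permutes_orbit_subset[OF that(3)] by (auto simp: S_def)
    ultimately show ?thesis using A by simp
  qed
  have "cycle_product_sum g A =
      (\<Sum>(C, \<tau>, \<rho>) \<in> (SIGMA C:S. cyclic_perms C \<times> {\<rho>. \<rho> permutes A - C}).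
         \<Prod>c \<in> orbit (glue_on C \<tau> \<rho>) ` A. g c)"
    unfolding cycle_product_sum_def S_def
    using sum.reindex_bij_betw[OF bij_betw_glue_on_cycle[OF A], of "\<lambda>\<sigma>. \<Prod>c \<in> orbit \<sigma> ` A. g c"]
    by (simp add: case_prod_unfold)
  also have "\<dots> = (\<Sum>C \<in> S. \<Sum>(\<tau>, \<rho>) \<in> cyclic_perms C \<times> {\<rho>. \<rho> permutes A - C}.
                    g C * (\<Prod>c \<in> orbit \<rho> ` (A - C). g c))"
    by (subst sum.Sigma[OF finS ballI[OF fin_fibre], symmetric]) (auto intro!: sum.cong simp: prod_glue)
  also have "\<dots> = (\<Sum>C \<in> S. of_nat (card (cyclic_perms C)) * g C * cycle_product_sum g (A - C))"
    by (simp add: sum.cartesian_product[symmetric] cycle_product_sum_def sum_distrib_left mult.assoc)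
  finally show ?thesis unfolding S_def .
qed

lemma sum_card_subsets_containing:
  assumes A: "finite A" "a \<in> A"
  shows "(\<Sum>C | C \<subseteq> A \<and> a \<in> C. h (card C)) =
    (\<Sum>k = 1..card A. of_nat ((card A - 1) choose (k - 1)) * h k)"
proof -
  have finS: "finite {C. C \<subseteq> A \<and> a \<in> C}" using A by auto
  have img: "card ` {C. C \<subseteq> A \<and> a \<in> C} \<subseteq> {1..card A}"
    using A finite_subset[of _ A] by (auto simp: Suc_le_eq card_gt_0_iff card_mono)
  have card_fibre: "card {C \<in> {C. C \<subseteq> A \<and> a \<in> C}. card C = k} = (card A - 1) choose (k - 1)"
    if k: "k \<in> {1..card A}" for k
  proof -
    have fibre: "{C \<in> {C. C \<subseteq> A \<and> a \<in> C}. card C = k} = insert a ` {E. E \<subseteq> A - {a} \<and> card E = k - 1}"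
    proof (intro equalityI subsetI)
      fix C assume C: "C \<in> {C \<in> {C. C \<subseteq> A \<and> a \<in> C}. card C = k}"
      then have "C = insert a (C - {a})" "card (C - {a}) = k - 1"
        using A finite_subset[of C A] by auto
      then show "C \<in> insert a ` {E. E \<subseteq> A - {a} \<and> card E = k - 1}" using C by blast
    next
      fix C assume "C \<in> insert a ` {E. E \<subseteq> A - {a} \<and> card E = k - 1}"
      then obtain E where E: "E \<subseteq> A - {a}" "card E = k - 1" "C = insert a E" by auto
      have "finite E" using E A finite_subset by (metis finite_Diff)
      then show "C \<in> {C \<in> {C. C \<subseteq> A \<and> a \<in> C}. card C = k}" using E A k by (auto simp: card_insert_if)
    qed
    have "inj_on (insert a) {E. E \<subseteq> A - {a} \<and> card E = k - 1}"
      by (rule inj_onI) (metis Diff_insert_absorb insert_Diff mem_Collect_eq subset_Diff_insert)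
    then have "card {C \<in> {C. C \<subseteq> A \<and> a \<in> C}. card C = k} = card (A - {a}) choose (k - 1)"
      unfolding fibre using A by (simp add: card_image n_subsets)
    then show ?thesis using A by simp
  qed
  have "(\<Sum>C | C \<subseteq> A \<and> a \<in> C. h (card C)) =
      (\<Sum>k = 1..card A. of_nat (card {C \<in> {C. C \<subseteq> A \<and> a \<in> C}. card C = k}) * h k)"
    by (rule sum_fun_comp[OF finS _ img]) simp
  also have "\<dots> = (\<Sum>k = 1..card A. of_nat ((card A - 1) choose (k - 1)) * h k)"
    by (rule sum.cong[OF refl]) (simp only: card_fibre)
  finally show ?thesis .
qed

lemma choose_mult_fact_fact:
  assumes "1 \<le> k" "k \<le> m"
  shows "((m - 1) choose (k - 1)) * fact (k - 1) * fact (m - k) = (fact (m - 1) :: nat)"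
  using binomial_fact_lemma[of "k - 1" "m - 1"] assms by (simp add: mult_ac)

lemma cycle_product_sum_one: "finite A \<Longrightarrow> cycle_product_sum (\<lambda>_. 1) A = fact (card A)"
  by (simp add: cycle_product_sum_def card_permutations)

lemma card_cyclic_perms:
  assumes "finite C" "C \<noteq> {}"
  shows "card (cyclic_perms C) = fact (card C - 1)"
  using assms
proof (induction "card C" arbitrary: C rule: less_induct)
  case less
  obtain a where a: "a \<in> C" using less.prems by auto
  define m where "m = card C"
  define S where "S = {D. D \<subseteq> C \<and> a \<in> D}"
  have m1: "m \<ge> 1" using less.prems by (simp add: m_def Suc_le_eq card_gt_0_iff)
  have finS: "finite S" and CS: "C \<in> S" using less.prems a by (auto simp: S_def)
  have finD: "finite D" and card_diff: "card (C - D) = m - card D" if "D \<in> S" for D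
    using that less.prems(1) finite_subset[of D C] by (auto simp: S_def m_def card_Diff_subset)
  have IH: "card (cyclic_perms D) = fact (card D - 1)" if "D \<in> S - {C}" for D
    using that less finD[of D] psubset_card_mono[of C D] by (auto simp: S_def)
  have "fact m = cycle_product_sum (\<lambda>_. 1 :: nat) C"
    by (metis cycle_product_sum_one less.prems(1) m_def)
  also have "\<dots> = (\<Sum>D\<in>S. card (cyclic_perms D) * fact (m - card D))"
    unfolding cycle_product_sum_split_cycle[OF less.prems(1) a] S_def[symmetric]
    by (intro sum.cong refl) (simp add: cycle_product_sum_one less.prems(1) card_diff del: One_nat_def)
  also have "\<dots> = card (cyclic_perms C) + (\<Sum>D\<in>S - {C}. fact (card D - 1) * fact (m - card D))"
    using finS CS IH by (simp add: sum.remove m_def)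
  finally have split: "fact m = card (cyclic_perms C) + (\<Sum>D\<in>S - {C}. fact (card D - 1) * fact (m - card D))" .
  have "(\<Sum>D\<in>S. fact (card D - 1) * fact (m - card D)) =
      (\<Sum>k = 1..m. ((m - 1) choose (k - 1)) * (fact (k - 1) * fact (m - k)))"
    using sum_card_subsets_containing[OF less.prems(1) a, of "\<lambda>k. fact (k - 1) * fact (m - k) :: nat"]
    by (simp add: S_def m_def of_nat_id)
  also have "\<dots> = (\<Sum>k = 1..m. fact (m - 1))"
    using choose_mult_fact_fact by (intro sum.cong refl) (simp add: mult.assoc)
  also have "\<dots> = fact m" using m1 by (simp add: fact_reduce[of m])
  finally have "fact (m - 1) + (\<Sum>D\<in>S - {C}. fact (card D - 1) * fact (m - card D)) = (fact m :: nat)"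
    using finS CS by (simp add: sum.remove m_def)
  then show ?case using split by (simp add: m_def)
qed

text \<open>The hypothesis on \<open>e\<close> is the coefficientwise form of \<open>E' = U' E\<close> for
  \<open>E = \<Sum>e m t\<^sup>m\<close> and \<open>U = \<Sum>u j t\<^sup>j / j\<close>, i.e. \<open>E = exp U\<close>.\<close>
theorem exponential_formula:
  fixes u e :: "nat \<Rightarrow> 'b::{comm_semiring_1,semiring_char_0}"
  assumes e0: "e 0 = 1"
    and rec: "\<And>m. of_nat (Suc m) * e (Suc m) = (\<Sum>j = 1..Suc m. u j * e (Suc m - j))"
    and "finite A"
  shows "cycle_product_sum (\<lambda>c. u (card c)) A = fact (card A) * e (card A)"
  using \<open>finite A\<close>
proof (induction "card A" arbitrary: A rule: less_induct)
  case less
  show ?case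
  proof (cases "A = {}")
    case True
    then show ?thesis by (simp add: cycle_product_sum_def permutes_empty e0)
  next
    case False
    then obtain a where a: "a \<in> A" by auto
    define M where "M = card A"
    have M1: "M \<ge> 1" using less.prems False by (simp add: M_def Suc_le_eq card_gt_0_iff)
    have choose_fact: "of_nat ((M - 1) choose (k - 1)) * fact (k - 1) * fact (M - k) = (fact (M - 1) :: 'b)"
      if "k \<in> {1..M}" for k
      using arg_cong[OF choose_mult_fact_fact[of k M], of "of_nat :: nat \<Rightarrow> 'b"] that
      by (simp only: of_nat_mult of_nat_fact) simp
    have "cycle_product_sum (\<lambda>c. u (card c)) A =
        (\<Sum>C | C \<subseteq> A \<and> a \<in> C. fact (card C - 1) * u (card C) * (fact (M - card C) * e (M - card C)))"
    proof (unfold cycle_product_sum_split_cycle[OF less.prems a], intro sum.cong refl)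
      fix C assume "C \<in> {C. C \<subseteq> A \<and> a \<in> C}"
      then have C: "C \<subseteq> A" "C \<noteq> {}" "finite C" using less.prems finite_subset by auto
      then have "card (A - C) = M - card C" "card (A - C) < card A"
        using less.prems card_gt_0_iff[of C] card_mono[of A C] by (simp_all add: M_def card_Diff_subset)
      then show "of_nat (card (cyclic_perms C)) * u (card C) * cycle_product_sum (\<lambda>c. u (card c)) (A - C) =
          fact (card C - 1) * u (card C) * (fact (M - card C) * e (M - card C))"
        using card_cyclic_perms[of C] C less.hyps less.prems by (simp add: of_nat_fact)
    qed
    also have "\<dots> = (\<Sum>k = 1..M. of_nat ((M - 1) choose (k - 1)) *
                      (fact (k - 1) * u k * (fact (M - k) * e (M - k))))"
      unfolding M_def by (rule sum_card_subsets_containing[OF less.prems a])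
    also have "\<dots> = (\<Sum>k = 1..M. fact (M - 1) * (u k * e (M - k)))"
    proof (intro sum.cong refl)
      fix k assume "k \<in> {1..M}"
      have "of_nat ((M - 1) choose (k - 1)) * (fact (k - 1) * u k * (fact (M - k) * e (M - k))) =
          (of_nat ((M - 1) choose (k - 1)) * fact (k - 1) * fact (M - k)) * (u k * e (M - k))"
        by (simp only: mult_ac)
      then show "of_nat ((M - 1) choose (k - 1)) * (fact (k - 1) * u k * (fact (M - k) * e (M - k))) =
          fact (M - 1) * (u k * e (M - k))"
        by (simp only: choose_fact[OF \<open>k \<in> {1..M}\<close>])
    qed
    also have "\<dots> = fact (M - 1) * (of_nat M * e M)"
      using rec[of "M - 1"] M1 by (simp add: sum_distrib_left)
    also have "\<dots> = fact M * e M"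
      using M1 fact_reduce[of M, where 'a='b] by (simp add: mult_ac)
    finally show ?thesis by (simp add: M_def)
  qed
qed

section \<open>Pollak's cyclic-shift argument\<close>

definition count_le :: "nat list \<Rightarrow> nat \<Rightarrow> nat" where
  "count_le a j = length (filter (\<lambda>v. v \<le> j) a)"

lemma count_le_sort [simp]: "count_le (sort a) j = count_le a j"
  unfolding count_le_def by (metis mset_filter mset_sort size_mset)

lemma sorted_nth_le_iff_count_le:
  assumes s: "sorted s" and j: "1 \<le> j" "j \<le> length s"
  shows "s ! (j - 1) \<le> j \<longleftrightarrow> j \<le> count_le s j"
  unfolding count_le_def length_filter_conv_card
proof
  assume h: "s ! (j - 1) \<le> j"
  have "{0..<j} \<subseteq> {i. i < length s \<and> s ! i \<le> j}"
  proof
    fix i assume "i \<in> {0..<j}"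
    then have "i \<le> j - 1" "i < length s" using j by auto
    then have "s ! i \<le> s ! (j - 1)" using s j by (intro sorted_nth_mono) auto
    then show "i \<in> {i. i < length s \<and> s ! i \<le> j}" using h \<open>i < length s\<close> by auto
  qed
  then show "j \<le> card {i. i < length s \<and> s ! i \<le> j}"
    using card_mono[of "{i. i < length s \<and> s ! i \<le> j}" "{0..<j}"] by simp
next
  assume h: "j \<le> card {i. i < length s \<and> s ! i \<le> j}"
  show "s ! (j - 1) \<le> j"
  proof (rule ccontr)
    assume "\<not> s ! (j - 1) \<le> j"
    then have gt: "s ! (j - 1) > j" by simp
    have "{i. i < length s \<and> s ! i \<le> j} \<subseteq> {0..<j - 1}"
    proof
      fix i assume i: "i \<in> {i. i < length s \<and> s ! i \<le> j}"
      show "i \<in> {0..<j - 1}"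
      proof (rule ccontr)
        assume "i \<notin> {0..<j - 1}"
        then have "s ! (j - 1) \<le> s ! i" using s i by (intro sorted_nth_mono) auto
        then show False using gt i by simp
      qed
    qed
    then have "card {i. i < length s \<and> s ! i \<le> j} \<le> j - 1"
      by (metis card_atLeastLessThan card_mono finite_atLeastLessThan diff_zero)
    then show False using h j by simp
  qed
qed

lemma parking_functions_iff_count_le:
  assumes len: "length a = n"
  shows "a \<in> parking_functions n \<longleftrightarrow> (\<forall>i<n. 1 \<le> a ! i) \<and> (\<forall>j\<in>{1..n}. j \<le> count_le a j)"
proof -
  have "(\<forall>i<n. sort a ! i \<le> i + 1) \<longleftrightarrow> (\<forall>j\<in>{1..n}. sort a ! (j - 1) \<le> j)"
    unfolding image_Suc_lessThan[symmetric] by (auto simp: Ball_image_comp)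
  also have "\<dots> \<longleftrightarrow> (\<forall>j\<in>{1..n}. j \<le> count_le a j)"
    using sorted_nth_le_iff_count_le[of "sort a"] len by (intro ball_cong) auto
  finally show ?thesis unfolding parking_functions_def using len by auto
qed

definition cyc_shift :: "nat \<Rightarrow> nat \<Rightarrow> nat \<Rightarrow> nat" where
  "cyc_shift M k y = (y - 1 + k) mod M + 1"

lemma cyc_shift_bounds: "0 < M \<Longrightarrow> 1 \<le> cyc_shift M k y \<and> cyc_shift M k y \<le> M"
  unfolding cyc_shift_def by (simp add: Suc_leI)

lemma cyc_shift_0: "1 \<le> y \<Longrightarrow> y \<le> M \<Longrightarrow> cyc_shift M 0 y = y"
  unfolding cyc_shift_def by simp

lemma cyc_shift_cyc_shift: "0 < M \<Longrightarrow> cyc_shift M k (cyc_shift M k' y) = cyc_shift M (k' + k) y"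
  unfolding cyc_shift_def by (simp add: mod_add_left_eq add.assoc)

lemma cyc_shift_mod: "cyc_shift M (k mod M) = cyc_shift M k"
  unfolding cyc_shift_def by (simp add: mod_add_right_eq)

text \<open>For \<open>1 \<le> y \<le> n + 1\<close>, \<open>lifted_count n y t\<close> counts the \<open>z \<in> {1..t}\<close> with
  \<open>z \<equiv> y (mod n + 1)\<close>. Lifting a word \<open>b \<in> {1..n+1}\<^sup>n\<close> periodically, the excess
  \<open>#{lifted entries \<le> t} - t\<close> drops by 1 per period \<open>n + 1\<close>, and the cyclic shifts of \<open>b\<close> that
  are parking functions are exactly those moving a minimum of the excess to the origin.\<close>
definition lifted_count :: "nat \<Rightarrow> nat \<Rightarrow> nat \<Rightarrow> nat" where
  "lifted_count n y t = (t + Suc n - y) div Suc n"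

lemma lifted_count_add:
  assumes y: "1 \<le> y" "y \<le> Suc n" and s: "s \<le> n" and j: "j \<le> n"
  shows "lifted_count n y (s + j) = lifted_count n y s + (if cyc_shift (Suc n) (Suc n - s) y \<le> j then 1 else 0)"
proof (cases "y \<le> s")
  case True
  have e: "y - 1 + (Suc n - s) = y + n - s" using True y s by simp
  have "y + n - s < Suc n" using True y s by simp
  then have m: "(y - 1 + (Suc n - s)) mod Suc n = y + n - s" unfolding e by simp
  have g1: "lifted_count n y s = 1" unfolding lifted_count_def using True y s by (intro div_nat_eqI) auto
  show ?thesis
  proof (cases "y + n - s < j")
    case True2: True
    have "lifted_count n y (s + j) = 2" unfolding lifted_count_def using True True2 y s j by (intro div_nat_eqI) auto
    then show ?thesis using g1 m True2 by (simp add: cyc_shift_def)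
  next
    case False2: False
    have "lifted_count n y (s + j) = 1" unfolding lifted_count_def using True False2 y s j by (intro div_nat_eqI) auto
    then show ?thesis using g1 m False2 by (simp add: cyc_shift_def)
  qed
next
  case False
  have m: "(y - 1 + (Suc n - s)) mod Suc n = y - 1 - s"
    using False y s by (intro mod_nat_eqI) auto
  have g0: "lifted_count n y s = 0" unfolding lifted_count_def using False y s by (intro div_nat_eqI) auto
  show ?thesis
  proof (cases "y - 1 - s < j")
    case True2: True
    have "lifted_count n y (s + j) = 1" unfolding lifted_count_def using False True2 y s j by (intro div_nat_eqI) auto
    then show ?thesis using g0 m True2 by (simp add: cyc_shift_def)
  next
    case False2: False
    have "lifted_count n y (s + j) = 0" unfolding lifted_count_def using False False2 y s j by (intro div_nat_eqI) auto
    then show ?thesis using g0 m False2 by (simp add: cyc_shift_def)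
  qed
qed

lemma lifted_count_period: "y \<le> Suc n \<Longrightarrow> lifted_count n y (t + Suc n) = lifted_count n y t + 1"
proof -
  assume "y \<le> Suc n"
  then have eq: "t + Suc n + Suc n - y = (t + Suc n - y) + Suc n" by simp
  show ?thesis unfolding lifted_count_def eq by (rule div_add_self2) simp
qed

definition word_lifted_count :: "nat \<Rightarrow> nat list \<Rightarrow> nat \<Rightarrow> nat" where
  "word_lifted_count n b t = (\<Sum>i<n. lifted_count n (b ! i) t)"

definition excess :: "nat \<Rightarrow> nat list \<Rightarrow> nat \<Rightarrow> int" where
  "excess n b t = int (word_lifted_count n b t) - int t"

lemma excess_period:
  assumes "\<forall>i<n. b ! i \<le> Suc n"
  shows "excess n b (t + Suc n) = excess n b t - 1"
proof -
  have "word_lifted_count n b (t + Suc n) = (\<Sum>i<n. lifted_count n (b ! i) t + 1)"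
    unfolding word_lifted_count_def by (rule sum.cong[OF refl]) (use assms lifted_count_period in auto)
  also have "\<dots> = word_lifted_count n b t + n" unfolding word_lifted_count_def by (simp only: sum.distrib) simp
  finally have "word_lifted_count n b (t + Suc n) = word_lifted_count n b t + n" .
  then show ?thesis unfolding excess_def by simp
qed

lemma count_le_shift:
  assumes len: "length b = n" and rng: "\<forall>i<n. 1 \<le> b ! i \<and> b ! i \<le> Suc n"
    and s: "s \<le> n" and j: "j \<le> n"
  shows "word_lifted_count n b (s + j) =
    word_lifted_count n b s + count_le (map (cyc_shift (Suc n) (Suc n - s)) b) j"
proof -
  have "count_le (map (cyc_shift (Suc n) (Suc n - s)) b) j =
      card ({..<n} \<inter> {i. cyc_shift (Suc n) (Suc n - s) (b ! i) \<le> j})"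
    unfolding count_le_def length_filter_conv_card using len by (intro arg_cong[where f=card]) auto
  also have "\<dots> = (\<Sum>i<n. if cyc_shift (Suc n) (Suc n - s) (b ! i) \<le> j then 1 else 0)"
    by (simp add: sum.If_cases)
  finally show ?thesis
    unfolding word_lifted_count_def using rng s j lifted_count_add by (simp add: sum.distrib)
qed

definition excess_min_at :: "nat \<Rightarrow> nat list \<Rightarrow> nat \<Rightarrow> bool" where
  "excess_min_at n b s \<longleftrightarrow> (\<forall>j\<in>{1..n}. excess n b s \<le> excess n b (s + j))"

lemma rotate_to_in_parking_functions_iff:
  assumes len: "length b = n" and rng: "\<forall>i<n. 1 \<le> b ! i \<and> b ! i \<le> Suc n" and s: "s \<le> n"
  shows "map (cyc_shift (Suc n) (Suc n - s)) b \<in> parking_functions n \<longleftrightarrow> excess_min_at n b s"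
proof -
  have ge1: "\<forall>i<n. map (cyc_shift (Suc n) (Suc n - s)) b ! i \<ge> 1" using len cyc_shift_bounds[of "Suc n"] by auto
  have "(\<forall>j\<in>{1..n}. count_le (map (cyc_shift (Suc n) (Suc n - s)) b) j \<ge> j) \<longleftrightarrow> excess_min_at n b s"
    unfolding excess_min_at_def
  proof (intro ball_cong[OF refl])
    fix j assume "j \<in> {1..n}"
    then have "word_lifted_count n b (s + j) =
        word_lifted_count n b s + count_le (map (cyc_shift (Suc n) (Suc n - s)) b) j"
      using count_le_shift[OF len rng s] by auto
    then show "count_le (map (cyc_shift (Suc n) (Suc n - s)) b) j \<ge> j \<longleftrightarrow> excess n b s \<le> excess n b (s + j)"
      unfolding excess_def by linarith
  qed
  then show ?thesis using parking_functions_iff_count_le[of "map (cyc_shift (Suc n) (Suc n - s)) b" n] len ge1 by simp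
qed

lemma excess_min_at_unique:
  assumes rng: "\<forall>i<n. b ! i \<le> Suc n" and g1: "excess_min_at n b s1" and g2: "excess_min_at n b s2"
    and s: "s1 \<le> n" "s2 \<le> n"
  shows "s1 = s2"
proof (rule ccontr)
  assume ne: "s1 \<noteq> s2"
  have *: False if "excess_min_at n b p" "excess_min_at n b q" "p < q" "q \<le> n" for p q
  proof -
    have j1: "q - p \<in> {1..n}" using that by auto
    have "excess n b p \<le> excess n b (p + (q - p))" using that(1) j1 unfolding excess_min_at_def by blast
    then have a: "excess n b p \<le> excess n b q" using that by simp
    have j2: "p + Suc n - q \<in> {1..n}" using that by auto
    have "excess n b q \<le> excess n b (q + (p + Suc n - q))" using that(2) j2 unfolding excess_min_at_def by blast
    also have "q + (p + Suc n - q) = p + Suc n" using that by simp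
    also have "excess n b (p + Suc n) = excess n b p - 1" by (rule excess_period[OF rng])
    finally show False using a by simp
  qed
  show False
    using *[OF g1 g2] *[OF g2 g1] s ne by linarith
qed

lemma ex_excess_min_at:
  assumes rng: "\<forall>i<n. b ! i \<le> Suc n"
  shows "\<exists>s\<le>n. excess_min_at n b s"
proof -
  define mn where "mn = Min (excess n b ` {0..n})"
  have mn_le: "s \<le> n \<Longrightarrow> mn \<le> excess n b s" for s unfolding mn_def by (intro Min_le) auto
  have "mn \<in> excess n b ` {0..n}" unfolding mn_def by (intro Min_in) auto
  then obtain s0 where s0: "s0 \<le> n" "excess n b s0 = mn" by auto
  \<comment> \<open>the first minimiser: the drop by 1 after a full period is then compensated\<close>
  define s where "s = (LEAST s. s \<le> n \<and> excess n b s = mn)"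
  have sP: "s \<le> n \<and> excess n b s = mn" unfolding s_def by (rule LeastI[of _ s0]) (use s0 in auto)
  have smin: "p < s \<Longrightarrow> excess n b p > mn" for p
  proof -
    assume "p < s"
    then have "\<not> (p \<le> n \<and> excess n b p = mn)" unfolding s_def using not_less_Least by blast
    then show "excess n b p > mn" using mn_le[of p] \<open>p < s\<close> sP by force
  qed
  have "excess_min_at n b s" unfolding excess_min_at_def
  proof
    fix j assume j: "j \<in> {1..n}"
    show "excess n b s \<le> excess n b (s + j)"
    proof (cases "s + j \<le> n")
      case True then show ?thesis using mn_le sP by simp
    next
      case False
      define p where "p = s + j - Suc n"
      have pl: "p < s" using j False p_def by auto
      have "s + j = p + Suc n" using False p_def by simp
      then have "excess n b (s + j) = excess n b p - 1" using excess_period[OF rng] by simp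
      then show ?thesis using smin[OF pl] sP by simp
    qed
  qed
  then show ?thesis using sP by blast
qed

lemma mod_Suc_le: "x mod Suc n \<le> n"
  using less_Suc_eq_le mod_less_divisor zero_less_Suc by blast

lemma Suc_diff_mod_Suc_diff: "k \<le> n \<Longrightarrow> (Suc n - (Suc n - k) mod Suc n) mod Suc n = k"
  by (cases "k = 0") (auto simp: mod_less)

lemma cyc_shift_in_parking_functions_iff:
  assumes "length b = n" "\<forall>i<n. 1 \<le> b ! i \<and> b ! i \<le> Suc n" "k \<le> n"
  shows "map (cyc_shift (Suc n) k) b \<in> parking_functions n \<longleftrightarrow> excess_min_at n b ((Suc n - k) mod Suc n)"
proof -
  have eq: "map (cyc_shift (Suc n) k) b = map (cyc_shift (Suc n) (Suc n - (Suc n - k) mod Suc n)) b"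
    using cyc_shift_mod[of "Suc n" "Suc n - (Suc n - k) mod Suc n"] Suc_diff_mod_Suc_diff[OF assms(3)] by simp
  show ?thesis unfolding eq by (rule rotate_to_in_parking_functions_iff[OF assms(1,2) mod_Suc_le])
qed

lemma ex_cyc_shift_in_parking_functions:
  assumes "length b = n" "\<forall>i<n. 1 \<le> b ! i \<and> b ! i \<le> Suc n"
  shows "\<exists>k\<le>n. map (cyc_shift (Suc n) k) b \<in> parking_functions n"
proof -
  obtain s where s: "s \<le> n" "excess_min_at n b s" using ex_excess_min_at[of n b] assms(2) by auto
  then have "map (cyc_shift (Suc n) ((Suc n - s) mod Suc n)) b \<in> parking_functions n"
    using cyc_shift_in_parking_functions_iff[OF assms mod_Suc_le] by (simp add: Suc_diff_mod_Suc_diff)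
  then show ?thesis using mod_Suc_le by blast
qed

lemma cyc_shift_in_parking_functions_unique:
  assumes "length b = n" "\<forall>i<n. 1 \<le> b ! i \<and> b ! i \<le> Suc n" "k1 \<le> n" "k2 \<le> n"
    and "map (cyc_shift (Suc n) k1) b \<in> parking_functions n" "map (cyc_shift (Suc n) k2) b \<in> parking_functions n"
  shows "k1 = k2"
proof -
  have "(Suc n - k1) mod Suc n = (Suc n - k2) mod Suc n"
    using assms excess_min_at_unique[of n b] cyc_shift_in_parking_functions_iff[OF assms(1,2)] mod_Suc_le
    by (metis le_SucI)
  then show ?thesis using Suc_diff_mod_Suc_diff assms(3,4) by metis
qed

lemma map_cyc_shift_cyc_shift:
  "0 < M \<Longrightarrow> map (cyc_shift M k) (map (cyc_shift M k') b) = map (cyc_shift M (k' + k)) b"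
  by (simp add: cyc_shift_cyc_shift)

lemma map_cyc_shift_id:
  assumes "set b \<subseteq> {1..M}" "k mod M = 0"
  shows "map (cyc_shift M k) b = b"
proof (rule map_idI)
  fix y assume "y \<in> set b"
  moreover have "cyc_shift M k = cyc_shift M 0" using assms(2) cyc_shift_mod[of M k] by simp
  ultimately show "cyc_shift M k y = y" using assms(1) cyc_shift_0[of y M] by auto
qed

lemma map_cyc_shift_inverse:
  assumes "set b \<subseteq> {1..M}" "k \<le> M"
  shows "map (cyc_shift M (M - k)) (map (cyc_shift M k) b) = b"
proof (cases "M = 0")
  case False
  then show ?thesis
    using assms by (simp only: map_cyc_shift_cyc_shift) (simp add: map_cyc_shift_id)
qed (use assms in auto)

lemma parking_function_bounds: "a \<in> parking_functions n \<Longrightarrow> set a \<subseteq> {1..n}"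
proof
  fix y assume a: "a \<in> parking_functions n" and y: "y \<in> set a"
  then have len: "length a = n" by (simp add: parking_functions_def)
  have "y \<in> set (sort a)" using y by simp
  then obtain j where j: "j < n" "sort a ! j = y" using len by (metis in_set_conv_nth length_sort)
  have "1 \<le> y" using a y by (auto simp: parking_functions_def in_set_conv_nth)
  moreover have "y \<le> n" using a j by (fastforce simp: parking_functions_def)
  ultimately show "y \<in> {1..n}" by simp
qed

lemma cyc_shift_parking_function_eq_0:
  assumes "a \<in> parking_functions n" "map (cyc_shift (Suc n) d) a \<in> parking_functions n" "d \<le> n"
  shows "d = 0"
proof -
  have len: "length a = n" using assms(1) by (simp add: parking_functions_def)
  have range: "set a \<subseteq> {1..Suc n}" using parking_function_bounds[OF assms(1)] by auto
  then have "map (cyc_shift (Suc n) 0) a = a" by (simp add: map_cyc_shift_id)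
  then show ?thesis
    using cyc_shift_in_parking_functions_unique[OF len _ assms(3) _ assms(2)] range len assms(1)
    by (auto simp: subset_iff)
qed

lemma eq_if_mod_Suc_add_diff_eq_0:
  assumes "k \<le> n" "k' \<le> n" "(k + (Suc n - k')) mod Suc n = 0"
  shows "k = k'"
proof (rule ccontr)
  assume "k \<noteq> k'"
  then consider "k < k'" | "k' < k" by linarith
  then show False
  proof cases
    case 1
    then have "(k + (Suc n - k')) mod Suc n = k + (Suc n - k')" using assms by (intro mod_less) auto
    then show False using assms by simp
  next
    case 2
    then have "(k + (Suc n - k')) mod Suc n = k - k'" using assms by (intro mod_nat_eqI) auto
    then show False using assms 2 by simp
  qed
qed

definition invariant_words :: "nat \<Rightarrow> (nat \<Rightarrow> nat) \<Rightarrow> nat list set" where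
  "invariant_words n \<sigma> = {b. length b = n \<and> set b \<subseteq> {1..Suc n} \<and> (\<forall>i<n. b ! \<sigma> i = b ! i)}"

text \<open>Every \<open>\<sigma>\<close>-invariant word has exactly one cyclic shift that is a parking function,
  and it is again \<open>\<sigma>\<close>-invariant.\<close>
lemma card_fixed_pfs_mult:
  assumes \<sigma>: "\<sigma> permutes {..<n}"
  shows "card (fixed_pfs n \<sigma>) * Suc n = card (invariant_words n \<sigma>)"
proof -
  have \<sigma>_lt: "i < n \<Longrightarrow> \<sigma> i < n" for i using permutes_in_image[OF \<sigma>] by auto
  have fixed: "length a = n \<and> set a \<subseteq> {1..Suc n} \<and> (\<forall>i<n. a ! \<sigma> i = a ! i) \<and> a \<in> parking_functions n"
    if "a \<in> fixed_pfs n \<sigma>" for a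
    using that parking_function_bounds[of a n] unfolding fixed_pfs_def parking_functions_def by auto
  have range: "\<forall>i<n. 1 \<le> b ! i \<and> b ! i \<le> Suc n" if "length b = n" "set b \<subseteq> {1..Suc n}" for b
    using that by (auto simp: subset_iff)
  have "bij_betw (\<lambda>(a, k). map (cyc_shift (Suc n) k) a) (fixed_pfs n \<sigma> \<times> {..n}) (invariant_words n \<sigma>)"
  proof (rule bij_betw_imageI)
    show "inj_on (\<lambda>(a, k). map (cyc_shift (Suc n) k) a) (fixed_pfs n \<sigma> \<times> {..n})"
    proof (clarsimp simp: inj_on_def)
      fix a k a' k'
      assume a: "a \<in> fixed_pfs n \<sigma>" "k \<le> n" and a': "a' \<in> fixed_pfs n \<sigma>" "k' \<le> n"
        and eq: "map (cyc_shift (Suc n) k) a = map (cyc_shift (Suc n) k') a'"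
      have "a' = map (cyc_shift (Suc n) (Suc n - k')) (map (cyc_shift (Suc n) k') a')"
        by (rule map_cyc_shift_inverse[symmetric]) (use fixed[OF a'(1)] a'(2) in auto)
      also have "\<dots> = map (cyc_shift (Suc n) ((k + (Suc n - k')) mod Suc n)) a"
        by (simp only: eq[symmetric] map_cyc_shift_cyc_shift zero_less_Suc cyc_shift_mod)
      finally have "map (cyc_shift (Suc n) ((k + (Suc n - k')) mod Suc n)) a \<in> parking_functions n"
        using fixed[OF a'(1)] by simp
      then have "(k + (Suc n - k')) mod Suc n = 0"
        using fixed[OF a(1)] by (intro cyc_shift_parking_function_eq_0[OF _ _ mod_Suc_le]) auto
      then have "k = k'" by (rule eq_if_mod_Suc_add_diff_eq_0[OF a(2) a'(2)])
      have "a = map (cyc_shift (Suc n) (Suc n - k)) (map (cyc_shift (Suc n) k) a)"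
        by (rule map_cyc_shift_inverse[symmetric]) (use fixed[OF a(1)] a(2) in auto)
      also have "\<dots> = map (cyc_shift (Suc n) (Suc n - k')) (map (cyc_shift (Suc n) k') a')"
        unfolding eq by (simp only: \<open>k = k'\<close>)
      also have "\<dots> = a'"
        by (rule map_cyc_shift_inverse) (use fixed[OF a'(1)] a'(2) in auto)
      finally show "a = a' \<and> k = k'" using \<open>k = k'\<close> by simp
    qed
  next
    show "(\<lambda>(a, k). map (cyc_shift (Suc n) k) a) ` (fixed_pfs n \<sigma> \<times> {..n}) = invariant_words n \<sigma>"
    proof (intro equalityI subsetI)
      fix b assume "b \<in> (\<lambda>(a, k). map (cyc_shift (Suc n) k) a) ` (fixed_pfs n \<sigma> \<times> {..n})"
      then obtain a k where a: "a \<in> fixed_pfs n \<sigma>" and b: "b = map (cyc_shift (Suc n) k) a" by auto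
      have "set b \<subseteq> {1..Suc n}" using cyc_shift_bounds[of "Suc n"] by (auto simp: b)
      then show "b \<in> invariant_words n \<sigma>"
        using fixed[OF a] \<sigma>_lt by (simp add: invariant_words_def b)
    next
      fix b assume b: "b \<in> invariant_words n \<sigma>"
      then have len: "length b = n" and set: "set b \<subseteq> {1..Suc n}" and inv: "\<forall>i<n. b ! \<sigma> i = b ! i"
        by (auto simp: invariant_words_def)
      obtain k0 where k0: "k0 \<le> n" "map (cyc_shift (Suc n) k0) b \<in> parking_functions n"
        using ex_cyc_shift_in_parking_functions[OF len range[OF len set]] by blast
      define a where "a = map (cyc_shift (Suc n) k0) b"
      have "a \<in> fixed_pfs n \<sigma>" using k0 len inv \<sigma>_lt by (simp add: fixed_pfs_def a_def)
      moreover have "map (cyc_shift (Suc n) ((Suc n - k0) mod Suc n)) a = b"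
        using map_cyc_shift_inverse[OF set, of k0] k0(1) by (simp only: a_def cyc_shift_mod)
      ultimately show "b \<in> (\<lambda>(a, k). map (cyc_shift (Suc n) k) a) ` (fixed_pfs n \<sigma> \<times> {..n})"
        by (intro image_eqI[where x = "(a, (Suc n - k0) mod Suc n)"]) (simp_all add: mod_Suc_le)
    qed
  qed
  then show ?thesis by (metis bij_betw_same_card card_cartesian_product card_atMost)
qed

lemma nth_eq_on_orbit:
  assumes \<sigma>: "\<sigma> permutes {..<n}" and inv: "\<forall>i<n. b ! \<sigma> i = b ! i" and i: "i < n"
  shows "j \<in> orbit \<sigma> i \<Longrightarrow> b ! j = b ! i"
proof (induction rule: orbit.induct)
  case base then show ?case using inv i by simp
next
  case (step y)
  have "y < n" using permutes_orbit_subset[OF \<sigma>, of i] i step.hyps by auto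
  then show ?case using inv step.IH by simp
qed

lemma card_invariant_words:
  assumes \<sigma>: "\<sigma> permutes {..<n}"
  shows "card (invariant_words n \<sigma>) = Suc n ^ card (cycles_of n \<sigma>)"
proof -
  have perm: "permutation \<sigma>" using \<sigma> by (auto simp: permutation_permutes)
  have \<sigma>_lt: "i < n \<Longrightarrow> \<sigma> i < n" for i using permutes_in_image[OF \<sigma>] by auto
  define word where "word f = map (\<lambda>i. f (orbit \<sigma> i)) [0..<n]" for f :: "nat set \<Rightarrow> nat"
  define P where "P = cycles_of n \<sigma> \<rightarrow>\<^sub>E {1..Suc n}"
  have "bij_betw word P (invariant_words n \<sigma>)"
  proof (rule bij_betw_imageI)
    show "inj_on word P"
    proof (rule inj_onI)
      fix f g assume f: "f \<in> P" and g: "g \<in> P" and eq: "word f = word g"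
      show "f = g"
      proof (rule PiE_ext[OF f[unfolded P_def] g[unfolded P_def]])
        fix c assume "c \<in> cycles_of n \<sigma>"
        then obtain i where "i < n" "c = orbit \<sigma> i" by (auto simp: cycles_of_def)
        then show "f c = g c" using arg_cong[OF eq, of "\<lambda>w. w ! i"] by (simp add: word_def)
      qed
    qed
  next
    show "word ` P = invariant_words n \<sigma>"
    proof (intro equalityI subsetI)
      fix b assume "b \<in> word ` P"
      then obtain f where f: "f \<in> P" "b = word f" by auto
      have "i < n \<Longrightarrow> f (orbit \<sigma> i) \<in> {1..Suc n}" for i
        using f(1) by (auto simp: P_def cycles_of_def PiE_def Pi_def)
      moreover have "orbit \<sigma> (\<sigma> i) = orbit \<sigma> i" for i by (rule permutation_orbit_step[OF perm])
      ultimately show "b \<in> invariant_words n \<sigma>"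
        using f(2) \<sigma>_lt by (auto simp: invariant_words_def word_def)
    next
      fix b assume b: "b \<in> invariant_words n \<sigma>"
      then have len: "length b = n" and set: "set b \<subseteq> {1..Suc n}" and inv: "\<forall>i<n. b ! \<sigma> i = b ! i"
        by (auto simp: invariant_words_def)
      define rep where "rep c = (SOME i. i < n \<and> c = orbit \<sigma> i)" for c
      have rep: "rep c < n \<and> c = orbit \<sigma> (rep c)" if "c \<in> cycles_of n \<sigma>" for c
        using that unfolding rep_def cycles_of_def by (rule someI_ex[OF imageE]) auto
      define f where "f = restrict (\<lambda>c. b ! rep c) (cycles_of n \<sigma>)"
      have "f \<in> P" using rep set len by (auto simp: f_def P_def subset_iff)
      moreover have "word f = b"
      proof (rule nth_equalityI)
        show "length (word f) = length b" using len by (simp add: word_def)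
      next
        fix i assume "i < length (word f)"
        then have i: "i < n" by (simp add: word_def)
        then have c: "orbit \<sigma> i \<in> cycles_of n \<sigma>" by (auto simp: cycles_of_def)
        have "i \<in> orbit \<sigma> (rep (orbit \<sigma> i))"
          using rep[OF c] permutation_self_in_orbit[OF perm, of i] by simp
        then have "b ! i = b ! rep (orbit \<sigma> i)" using nth_eq_on_orbit[OF \<sigma> inv] rep[OF c] by blast
        then show "word f ! i = b ! i" using i c by (simp add: word_def f_def)
      qed
      ultimately show "b \<in> word ` P" by blast
    qed
  qed
  then have "card (invariant_words n \<sigma>) = card P" by (simp add: bij_betw_same_card)
  also have "\<dots> = Suc n ^ card (cycles_of n \<sigma>)"
    unfolding P_def by (simp add: card_PiE cycles_of_def)
  finally show ?thesis .
qed

lemma card_cycles_of_ge_1: "n \<ge> 1 \<Longrightarrow> card (cycles_of n \<sigma>) \<ge> 1"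
  by (auto simp: cycles_of_def Suc_le_eq card_gt_0_iff)

theorem card_fixed_pfs:
  assumes "\<sigma> permutes {..<n}" "n \<ge> 1"
  shows "card (fixed_pfs n \<sigma>) = Suc n ^ (card (cycles_of n \<sigma>) - 1)"
proof -
  have "Suc n ^ card (cycles_of n \<sigma>) = Suc n ^ (card (cycles_of n \<sigma>) - 1) * Suc n"
    using card_cycles_of_ge_1[OF assms(2)] by (metis Suc_diff_le diff_Suc_1 power_Suc2)
  then have "card (fixed_pfs n \<sigma>) * Suc n = Suc n ^ (card (cycles_of n \<sigma>) - 1) * Suc n"
    using card_fixed_pfs_mult[OF assms(1)] card_invariant_words[OF assms(1)] by simp
  then show ?thesis by (metis mult_right_cancel nat.distinct(1))
qed

section \<open>The generating function of the one-row Schur P-functions\<close>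

definition schurP_factor_logderiv :: "real \<Rightarrow> real fps" where
  "schurP_factor_logderiv c = Abs_fps (\<lambda>k. if even k then 2 * c ^ Suc k else 0)"

definition schurP_factor :: "real \<Rightarrow> real fps" where
  "schurP_factor c = (1 + fps_const c * fps_X) * inverse (1 - fps_const c * fps_X)"

lemma schurP_factor_logderiv_mult:
  "(1 - fps_const c ^ 2 * fps_X^2) * schurP_factor_logderiv c = fps_const (2 * c)"
proof (rule fps_ext)
  fix k
  have e: "(1 - fps_const c ^ 2 * fps_X^2) * schurP_factor_logderiv c = schurP_factor_logderiv c - fps_const (c^2) * (fps_X^2 * schurP_factor_logderiv c)"
    by (simp add: algebra_simps fps_const_power)
  have "((1 - fps_const c ^ 2 * fps_X^2) * schurP_factor_logderiv c) $ k = schurP_factor_logderiv c $ k - c^2 * (fps_X^2 * schurP_factor_logderiv c) $ k"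
    unfolding e by simp
  also have "\<dots> = fps_const (2 * c) $ k"
  proof (cases "k < 2")
    case True then show ?thesis by (cases k) (auto simp: schurP_factor_logderiv_def fps_X_power_mult_nth)
  next
    case False
    then obtain j where j: "k = Suc (Suc j)" by (metis add_2_eq_Suc le_add_diff_inverse not_less)
    have "(fps_X^2 * schurP_factor_logderiv c) $ k = schurP_factor_logderiv c $ j" using j by (simp add: fps_X_power_mult_nth)
    then show ?thesis using j by (auto simp: schurP_factor_logderiv_def power2_eq_square)
  qed
  finally show "((1 - fps_const c ^ 2 * fps_X^2) * schurP_factor_logderiv c) $ k = fps_const (2 * c) $ k" .
qed

lemma schurP_factor_deriv: "fps_deriv (schurP_factor c) = schurP_factor c * schurP_factor_logderiv c"
proof -
  define I where "I = inverse (1 - fps_const c * fps_X)"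
  define D where "D = (1 - fps_const c * fps_X :: real fps)"
  have DI: "D * I = 1" unfolding D_def I_def by (rule inverse_mult_eq_1') simp
  have dI: "fps_deriv I = fps_const c * I^2"
    unfolding I_def by (subst fps_inverse_deriv) simp_all
  have lhs: "fps_deriv (schurP_factor c) = fps_const c * I + (1 + fps_const c * fps_X) * (fps_const c * I^2)"
    unfolding schurP_factor_def I_def[symmetric] by (simp add: dI)
  have DD: "D^2 \<noteq> 0"
  proof -
    have "D $ 0 \<noteq> 0" by (simp add: D_def)
    then show ?thesis by (metis fps_zero_nth power_not_zero)
  qed
  have "D^2 * fps_deriv (schurP_factor c) = fps_const (2 * c)"
  proof -
    have "D^2 * fps_deriv (schurP_factor c) = fps_const c * (D * I) * D + (1 + fps_const c * fps_X) * fps_const c * (D * I)^2"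
      unfolding lhs by (simp add: algebra_simps power2_eq_square)
    also have "\<dots> = fps_const c * D + (1 + fps_const c * fps_X) * fps_const c" using DI by simp
    also have "\<dots> = fps_const c + fps_const c" unfolding D_def by (simp add: algebra_simps)
    also have "\<dots> = fps_const (2 * c)" by (metis fps_const_add mult_2)
    finally show ?thesis .
  qed
  moreover have "D^2 * (schurP_factor c * schurP_factor_logderiv c) = fps_const (2 * c)"
  proof -
    have "D^2 * (schurP_factor c * schurP_factor_logderiv c) = (D * I) * ((1 + fps_const c * fps_X) * D * schurP_factor_logderiv c)"
      unfolding schurP_factor_def I_def[symmetric] by (simp add: algebra_simps power2_eq_square)
    also have "(1 + fps_const c * fps_X) * D = 1 - fps_const c ^ 2 * fps_X^2"
      unfolding D_def by (simp add: algebra_simps power2_eq_square)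
    finally have "D^2 * (schurP_factor c * schurP_factor_logderiv c) = (D * I) * ((1 - fps_const c ^ 2 * fps_X^2) * schurP_factor_logderiv c)" .
    then show ?thesis by (simp only: DI schurP_factor_logderiv_mult mult_1_left)
  qed
  ultimately have "D^2 * fps_deriv (schurP_factor c) = D^2 * (schurP_factor c * schurP_factor_logderiv c)" by simp
  then show ?thesis using DD by simp
qed

lemma schurP_factor_nth_0: "schurP_factor c $ 0 = 1"
  by (simp add: schurP_factor_def)

definition shift_ps_fps :: "nat \<Rightarrow> (nat \<Rightarrow> real) \<Rightarrow> real fps" where
  "shift_ps_fps N x = Abs_fps (\<lambda>k. shift_ps N (Suc k) x)"

lemma schurP_gf_Suc: "schurP_gf (Suc N) x = schurP_gf N x * schurP_factor (x N)"
  by (simp add: schurP_gf_def schurP_factor_def)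

lemma shift_ps_fps_Suc: "shift_ps_fps (Suc N) x = shift_ps_fps N x + schurP_factor_logderiv (x N)"
  by (rule fps_ext) (auto simp: shift_ps_fps_def schurP_factor_logderiv_def shift_ps_def power_sum_def)

lemma schurP_gf_deriv: "fps_deriv (schurP_gf N x) = schurP_gf N x * shift_ps_fps N x"
proof (induction N)
  case 0 then show ?case by (simp add: schurP_gf_def shift_ps_fps_def shift_ps_def power_sum_def fps_eq_iff)
next
  case (Suc N)
  show ?case unfolding schurP_gf_Suc shift_ps_fps_Suc
    by (simp add: Suc.IH schurP_factor_deriv algebra_simps)
qed

lemma schurP_gf_nth_0: "schurP_gf N x $ 0 = 1"
proof (induction N)
  case 0 then show ?case by (simp add: schurP_gf_def)
next
  case (Suc N) then show ?case by (simp add: schurP_gf_Suc schurP_factor_nth_0)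
qed

lemma schurP_gf_power_nth_rec:
  fixes m :: nat
  shows "real (Suc k) * (schurP_gf N x ^ m) $ Suc k =
    real m * (\<Sum>j\<in>{1..Suc k}. shift_ps N j x * (schurP_gf N x ^ m) $ (Suc k - j))"
proof -
  define Q where "Q = schurP_gf N x"
  have d: "fps_deriv (Q ^ m) = fps_const (real m) * (Q ^ m * shift_ps_fps N x)"
  proof (cases m)
    case 0 then show ?thesis by simp
  next
    case (Suc m')
    have "fps_deriv (Q ^ m) = fps_const (real m) * fps_deriv Q * Q ^ m'"
      unfolding Suc by (subst fps_deriv_power) simp
    also have "\<dots> = fps_const (real m) * (Q ^ m * shift_ps_fps N x)"
      using Suc by (simp add: Q_def schurP_gf_deriv algebra_simps)
    finally show ?thesis .
  qed
  have "real (Suc k) * (Q ^ m) $ Suc k = fps_deriv (Q ^ m) $ k" by simp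
  also have "\<dots> = real m * (\<Sum>i=0..k. (Q ^ m) $ i * shift_ps_fps N x $ (k - i))"
    unfolding d fps_mult_left_const_nth by (simp only: fps_mult_nth)
  also have "(\<Sum>i=0..k. (Q ^ m) $ i * shift_ps_fps N x $ (k - i)) = (\<Sum>j\<in>{1..Suc k}. shift_ps N j x * (Q ^ m) $ (Suc k - j))"
  proof (rule sum.reindex_bij_witness[where i="\<lambda>j. Suc k - j" and j="\<lambda>i. Suc k - i"])
    fix a assume a: "a \<in> {0..k}"
    then show "Suc k - (Suc k - a) = a" "Suc k - a \<in> {1..Suc k}" by auto
    have e: "Suc k - (Suc k - a) = a" "Suc (k - a) = Suc k - a" using a by auto
    show "shift_ps N (Suc k - a) x * (Q ^ m) $ (Suc k - (Suc k - a)) = (Q ^ m) $ a * shift_ps_fps N x $ (k - a)"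
      unfolding e(1) by (simp add: shift_ps_fps_def e(2))
  next
    fix b assume "b \<in> {1..Suc k}"
    then show "Suc k - (Suc k - b) = b" "Suc k - b \<in> {0..k}" by auto
  qed
  finally show ?thesis unfolding Q_def .
qed


lemma linear_fps_compose_uminus: "(1 + fps_const d * fps_X :: real fps) oo (- fps_X) = 1 + fps_const (- d) * fps_X"
proof -
  have "(1 + fps_const d * fps_X :: real fps) oo (- fps_X) = Abs_fps (\<lambda>n. (-1)^n * (1 + fps_const d * fps_X :: real fps) $ n)"
    by (rule fps_compose_uminus')
  also have "\<dots> = 1 + fps_const (- d) * fps_X"
  proof (rule fps_ext)
    fix n show "Abs_fps (\<lambda>n. (-1)^n * (1 + fps_const d * fps_X :: real fps) $ n) $ n = (1 + fps_const (- d) * fps_X) $ n"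
      by (cases n) auto
  qed
  finally show ?thesis .
qed

lemma schurP_factor_altdef: "schurP_factor c = (1 + fps_const c * fps_X) * inverse (1 + fps_const (- c) * fps_X)"
proof -
  have "1 + fps_const (- c) * fps_X = (1 - fps_const c * fps_X :: real fps)"
    by (metis diff_conv_add_uminus fps_const_neg mult_minus_left)
  then show ?thesis unfolding schurP_factor_def by simp
qed

lemma schurP_factor_reflect: "schurP_factor c * (schurP_factor c oo (- fps_X)) = 1"
proof -
  have X0: "(- fps_X :: real fps) $ 0 = 0" by simp
  have "schurP_factor c oo (- fps_X) = ((1 + fps_const c * fps_X) oo (- fps_X)) * (inverse (1 + fps_const (- c) * fps_X) oo (- fps_X))"
    unfolding schurP_factor_altdef by (rule fps_compose_mult_distrib[OF X0])
  also have "inverse (1 + fps_const (- c) * fps_X :: real fps) oo (- fps_X) = inverse ((1 + fps_const (- c) * fps_X) oo (- fps_X))"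
    by (rule fps_inverse_compose[OF X0]) simp
  finally have e: "schurP_factor c oo (- fps_X) = (1 + fps_const (- c) * fps_X) * inverse (1 + fps_const c * fps_X)"
    by (simp add: linear_fps_compose_uminus)
  define A where "A = (1 + fps_const c * fps_X :: real fps)"
  define B where "B = (1 + fps_const (- c) * fps_X :: real fps)"
  have A1: "A * inverse A = 1" unfolding A_def by (rule inverse_mult_eq_1') simp
  have B1: "B * inverse B = 1" unfolding B_def by (rule inverse_mult_eq_1') simp
  have "schurP_factor c * (schurP_factor c oo (- fps_X)) = (A * inverse A) * (B * inverse B)"
    unfolding e unfolding schurP_factor_altdef A_def[symmetric] B_def[symmetric] by (simp add: algebra_simps)
  then show ?thesis using A1 B1 by simp
qed

lemma schurP_gf_reflect: "schurP_gf N x * (schurP_gf N x oo (- fps_X)) = 1"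
proof (induction N)
  case 0 then show ?case by (simp add: schurP_gf_def)
next
  case (Suc N)
  have X0: "(- fps_X :: real fps) $ 0 = 0" by simp
  have "schurP_gf (Suc N) x * (schurP_gf (Suc N) x oo (- fps_X)) =
      (schurP_gf N x * (schurP_gf N x oo (- fps_X))) * (schurP_factor (x N) * (schurP_factor (x N) oo (- fps_X)))"
    unfolding schurP_gf_Suc fps_compose_mult_distrib[OF X0] by (simp add: algebra_simps)
  then show ?case using Suc schurP_factor_reflect by simp
qed

text \<open>By Pollak's count, the summand of \<open>\<sigma>\<close> in \<open>SH\<close> is \<open>(n+1)\<^sup>-\<^sup>1\<close> times a product over the
  cycles of \<open>\<sigma>\<close> of \<open>(n+1) \<cdot> shift_ps (card c)\<close>; by the exponential formula the sum is the
  coefficient of \<open>t\<^sup>n\<close> in \<open>exp ((n+1) \<Sum>shift_ps j t\<^sup>j / j) = schurP_gf\<^sup>n\<^sup>+\<^sup>1\<close>.\<close>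
lemma SH_eq_schurP_gf_power_nth:
  assumes n: "n \<ge> 1"
  shows "SH n N x = (schurP_gf N x ^ Suc n) $ n / real (Suc n)"
proof -
  define u where "u k = real (Suc n) * shift_ps N k x" for k
  define e where "e k = (schurP_gf N x ^ Suc n) $ k" for k
  have e0: "e 0 = 1" unfolding e_def by (simp add: fps_power_zeroth_eq_one schurP_gf_nth_0)
  have rec: "of_nat (Suc m) * e (Suc m) = (\<Sum>j = 1..Suc m. u j * e (Suc m - j))" for m
  proof -
    have "of_nat (Suc m) * e (Suc m) = real (Suc n) * (\<Sum>j = 1..Suc m. shift_ps N j x * e (Suc m - j))"
      unfolding e_def by (rule schurP_gf_power_nth_rec)
    then show ?thesis by (simp only: u_def sum_distrib_left mult.assoc)
  qed
  have summand: "real (card (fixed_pfs n \<sigma>)) * (\<Prod>c\<in>cycles_of n \<sigma>. shift_ps N (card c) x) =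
      (\<Prod>c\<in>orbit \<sigma> ` {..<n}. u (card c)) / real (Suc n)" if \<sigma>: "\<sigma> permutes {..<n}" for \<sigma>
  proof -
    define C where "C = cycles_of n \<sigma>"
    have C1: "card C \<ge> 1" unfolding C_def using card_cycles_of_ge_1[OF n] .
    have "(\<Prod>c\<in>C. u (card c)) = real (Suc n) ^ (card C - 1) * real (Suc n) * (\<Prod>c\<in>C. shift_ps N (card c) x)"
      using C1 by (simp add: u_def prod.distrib flip: power_Suc2)
    then show ?thesis
      using card_fixed_pfs[OF \<sigma> n] by (simp add: C_def cycles_of_def)
  qed
  have "SH n N x = 1 / fact n * (\<Sum>\<sigma> | \<sigma> permutes {..<n}. (\<Prod>c\<in>orbit \<sigma> ` {..<n}. u (card c)) / real (Suc n))"
    unfolding SH_def by (simp add: summand)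
  also have "\<dots> = cycle_product_sum (\<lambda>c. u (card c)) {..<n} / (fact n * real (Suc n))"
    by (simp add: cycle_product_sum_def sum_divide_distrib mult.commute)
  also have "\<dots> = e n / real (Suc n)"
    using exponential_formula[of e u, OF e0 rec, of "{..<n}"] by simp
  finally show ?thesis unfolding e_def .
qed

section \<open>Powers of \<open>exp (arsinh t)\<close>\<close>

definition sqrt_1_plus_X2 :: "real fps" where
  "sqrt_1_plus_X2 = fps_radical (\<lambda>k a. 1) 2 (1 + fps_X^2)"

definition exp_arsinh :: "real fps" where
  "exp_arsinh = fps_X + sqrt_1_plus_X2"

lemma sqrt_1_plus_X2_square: "sqrt_1_plus_X2^2 = 1 + fps_X^2"
proof -
  have "((\<lambda>k a. 1::real) (Suc 1) ((1 + fps_X^2 :: real fps) $ 0)) ^ Suc 1 = (1 + fps_X^2 :: real fps) $ 0"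
    by simp
  then have "fps_radical (\<lambda>k a. 1) (Suc 1) (1 + fps_X^2 :: real fps) ^ Suc 1 = 1 + fps_X^2"
    using power_radical[of "1 + fps_X^2 :: real fps" "\<lambda>k a. 1" 1] by simp
  then show ?thesis by (simp add: sqrt_1_plus_X2_def numeral_2_eq_2)
qed

lemma sqrt_1_plus_X2_nth_0: "sqrt_1_plus_X2 $ 0 = 1"
  by (simp add: sqrt_1_plus_X2_def)

lemma exp_arsinh_nth_0: "exp_arsinh $ 0 = 1"
  by (simp add: exp_arsinh_def sqrt_1_plus_X2_nth_0)

lemma sqrt_1_plus_X2_deriv: "sqrt_1_plus_X2 * fps_deriv sqrt_1_plus_X2 = fps_X"
proof -
  have "fps_deriv (sqrt_1_plus_X2^2) = fps_deriv (1 + fps_X^2 :: real fps)" by (simp add: sqrt_1_plus_X2_square)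
  then have "fps_const 2 * (sqrt_1_plus_X2 * fps_deriv sqrt_1_plus_X2) = fps_const 2 * fps_X"
    by (simp add: power2_eq_square algebra_simps fps_const_add[symmetric] mult_2)
  then show ?thesis by (metis fps_const_eq_0_iff mult_cancel_left zero_neq_numeral)
qed

lemma exp_arsinh_deriv: "sqrt_1_plus_X2 * fps_deriv exp_arsinh = exp_arsinh"
  by (simp add: exp_arsinh_def distrib_left sqrt_1_plus_X2_deriv add.commute)

lemma exp_arsinh_square: "exp_arsinh ^ 2 = fps_X * exp_arsinh + fps_X * exp_arsinh + 1"
  by (simp add: exp_arsinh_def power2_eq_square algebra_simps sqrt_1_plus_X2_square[unfolded power2_eq_square])

lemma exp_arsinh_power_deriv:
  fixes m :: nat
  shows "sqrt_1_plus_X2 * fps_deriv (exp_arsinh ^ m) = fps_const (real m) * exp_arsinh ^ m"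
proof (cases m)
  case 0 then show ?thesis by simp
next
  case (Suc m')
  have "fps_deriv (exp_arsinh ^ m) = fps_const (real m) * fps_deriv exp_arsinh * exp_arsinh ^ m'"
    unfolding Suc by (subst fps_deriv_power) simp
  then have "sqrt_1_plus_X2 * fps_deriv (exp_arsinh ^ m) = fps_const (real m) * (sqrt_1_plus_X2 * fps_deriv exp_arsinh) * exp_arsinh ^ m'"
    by (simp add: algebra_simps)
  also have "\<dots> = fps_const (real m) * exp_arsinh ^ m" unfolding exp_arsinh_deriv using Suc by (simp add: algebra_simps)
  finally show ?thesis .
qed

lemma exp_arsinh_power_ode:
  fixes m :: nat
  defines "y \<equiv> exp_arsinh ^ m"
  shows "fps_X * fps_deriv y + (1 + fps_X^2) * fps_deriv (fps_deriv y) = fps_const (real m ^ 2) * y"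
proof -
  have d1: "sqrt_1_plus_X2 * fps_deriv y = fps_const (real m) * y" unfolding y_def by (rule exp_arsinh_power_deriv)
  have "fps_deriv (sqrt_1_plus_X2 * fps_deriv y) = fps_deriv (fps_const (real m) * y)" using d1 by simp
  then have d2: "fps_deriv sqrt_1_plus_X2 * fps_deriv y + sqrt_1_plus_X2 * fps_deriv (fps_deriv y) = fps_const (real m) * fps_deriv y"
    by (simp add: algebra_simps)
  have "sqrt_1_plus_X2 * (fps_deriv sqrt_1_plus_X2 * fps_deriv y + sqrt_1_plus_X2 * fps_deriv (fps_deriv y)) = sqrt_1_plus_X2 * (fps_const (real m) * fps_deriv y)"
    using d2 by simp
  then have "(sqrt_1_plus_X2 * fps_deriv sqrt_1_plus_X2) * fps_deriv y + sqrt_1_plus_X2^2 * fps_deriv (fps_deriv y) = fps_const (real m) * (sqrt_1_plus_X2 * fps_deriv y)"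
    by (simp add: algebra_simps power2_eq_square)
  then show ?thesis unfolding sqrt_1_plus_X2_deriv sqrt_1_plus_X2_square d1
    by (simp add: algebra_simps power2_eq_square fps_const_mult)
qed

lemma exp_arsinh_power_nth_rec:
  fixes m :: nat
  shows "real (Suc k) * real (Suc (Suc k)) * (exp_arsinh ^ m) $ (Suc (Suc k)) = (real m ^ 2 - real k ^ 2) * (exp_arsinh ^ m) $ k"
proof -
  define y where "y = exp_arsinh ^ m"
  have "(fps_X * fps_deriv y + (1 + fps_X^2) * fps_deriv (fps_deriv y)) $ k = (fps_const (real m ^ 2) * y) $ k"
    using exp_arsinh_power_ode[of m] by (simp add: y_def)
  moreover have "(fps_X * fps_deriv y) $ k = real k * y $ k" by (cases k) simp_all
  moreover have "((1 + fps_X^2) * fps_deriv (fps_deriv y)) $ k =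
      real (Suc k) * real (Suc (Suc k)) * y $ (Suc (Suc k)) + real k * (real k - 1) * y $ k"
  proof -
    have "((1 + fps_X^2) * fps_deriv (fps_deriv y)) $ k = fps_deriv (fps_deriv y) $ k + (fps_X^2 * fps_deriv (fps_deriv y)) $ k"
      by (simp add: distrib_right)
    moreover have "(fps_X^2 * fps_deriv (fps_deriv y)) $ k = real k * (real k - 1) * y $ k"
    proof (cases "k < 2")
      case True then show ?thesis by (auto simp: fps_X_power_mult_nth less_2_cases_iff)
    next
      case False
      then obtain j where j: "k = Suc (Suc j)" by (metis add_2_eq_Suc le_add_diff_inverse not_less)
      have "(fps_X^2 * fps_deriv (fps_deriv y)) $ k = fps_deriv (fps_deriv y) $ j" using j by (simp add: fps_X_power_mult_nth)
      also have "\<dots> = real k * (real k - 1) * y $ k" using j by (simp add: algebra_simps)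
      finally show ?thesis .
    qed
    ultimately show ?thesis by (simp add: algebra_simps)
  qed
  ultimately have "real k * y $ k + (real (Suc k) * real (Suc (Suc k)) * y $ (Suc (Suc k)) + real k * (real k - 1) * y $ k)
      = real m ^ 2 * y $ k" by simp
  then show ?thesis unfolding y_def[symmetric] by (simp add: algebra_simps power2_eq_square)
qed

lemma exp_arsinh_power_nth_1: "(exp_arsinh ^ m) $ 1 = real m"
proof -
  have "(sqrt_1_plus_X2 * fps_deriv (exp_arsinh ^ m)) $ 0 = (fps_const (real m) * exp_arsinh ^ m) $ 0" by (simp add: exp_arsinh_power_deriv)
  then show ?thesis by (simp add: sqrt_1_plus_X2_nth_0 fps_power_zeroth_eq_one exp_arsinh_nth_0)
qed

definition exp_arsinh_power_coeff :: "nat \<Rightarrow> nat \<Rightarrow> real" where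
  "exp_arsinh_power_coeff M l = real M / fact l * (\<Prod>j<l - 1. real M + real l - 2 - 2 * real j)"

lemma exp_arsinh_power_coeff_rec:
  assumes "l \<ge> 1"
  shows "real (Suc l) * real (Suc (Suc l)) * exp_arsinh_power_coeff M (Suc (Suc l)) =
    (real M ^ 2 - real l ^ 2) * exp_arsinh_power_coeff M l"
proof -
  define P where "P = (\<Prod>j<l - 1. real M + real l - 2 - 2 * real j)"
  obtain l' where l': "l = Suc l'" using assms by (cases l) auto
  have "(\<Prod>j<Suc l. real M + real (Suc (Suc l)) - 2 - 2 * real j) =
      (real M + real l) * (\<Prod>j<l. real M + real l - 2 - 2 * real j)"
    by (subst prod.lessThan_Suc_shift) (simp add: algebra_simps)
  also have "(\<Prod>j<l. real M + real l - 2 - 2 * real j) = P * (real M - real l)"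
    by (simp add: P_def l' algebra_simps)
  finally have "exp_arsinh_power_coeff M (Suc (Suc l)) =
      real M / fact (Suc (Suc l)) * ((real M + real l) * (P * (real M - real l)))"
    by (simp add: exp_arsinh_power_coeff_def)
  also have "(fact (Suc (Suc l)) :: real) = real (Suc l) * real (Suc (Suc l)) * fact l"
    by (simp add: algebra_simps)
  finally have "real (Suc l) * real (Suc (Suc l)) * exp_arsinh_power_coeff M (Suc (Suc l)) =
      real M / fact l * P * ((real M + real l) * (real M - real l))"
    by (simp add: field_simps del: of_nat_Suc)
  also have "real M / fact l * P = exp_arsinh_power_coeff M l"
    by (simp add: exp_arsinh_power_coeff_def P_def)
  finally show ?thesis by (simp add: algebra_simps power2_eq_square)
qed

lemma exp_arsinh_power_nth: "l \<ge> 1 \<Longrightarrow> (exp_arsinh ^ M) $ l = exp_arsinh_power_coeff M l"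
proof (induction l rule: less_induct)
  case (less l)
  show ?case
  proof (cases "l = 1")
    case True then show ?thesis using exp_arsinh_power_nth_1[of M] by (simp add: exp_arsinh_power_coeff_def)
  next
    case False
    show ?thesis
    proof (cases "l = 2")
      case True
      have "real (Suc 0) * real (Suc (Suc 0)) * (exp_arsinh ^ M) $ 2 = real M ^ 2"
        using exp_arsinh_power_nth_rec[of 0 M] by (simp add: numeral_2_eq_2 fps_power_zeroth_eq_one exp_arsinh_nth_0)
      then show ?thesis using True by (simp add: exp_arsinh_power_coeff_def power2_eq_square)
    next
      case False2: False
      define k where "k = l - 2"
      have k: "l = Suc (Suc k)" "k \<ge> 1" using False False2 less.prems unfolding k_def by arith+
      have ih: "(exp_arsinh ^ M) $ k = exp_arsinh_power_coeff M k" using less.IH k by simp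
      have "real (Suc k) * real (Suc (Suc k)) * (exp_arsinh ^ M) $ l = real (Suc k) * real (Suc (Suc k)) * exp_arsinh_power_coeff M l"
        using exp_arsinh_power_nth_rec[of k M] exp_arsinh_power_coeff_rec[OF k(2), of M] ih k(1) by simp
      then show ?thesis by simp
    qed
  qed
qed

section \<open>Power series with \<open>f(t) f(-t) = 1\<close>\<close>

definition fps_odd_part :: "'a::comm_ring_1 fps \<Rightarrow> 'a fps" where
  "fps_odd_part f = Abs_fps (\<lambda>k. if odd k then f $ k else 0)"

lemma fps_odd_part_nth_0 [simp]: "fps_odd_part f $ 0 = 0"
  by (simp add: fps_odd_part_def)

lemma fps_odd_part_double: "fps_odd_part f + fps_odd_part f = f - (f oo - fps_X)"
  unfolding fps_eq_iff fps_add_nth fps_sub_nth fps_compose_uminus'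
proof
  fix n show "fps_odd_part f $ n + fps_odd_part f $ n = f $ n - Abs_fps (\<lambda>n. (- 1) ^ n * f $ n) $ n"
    by (cases "even n") (simp_all add: fps_odd_part_def)
qed

lemma fps_square_eq_odd_part:
  fixes f :: "'a::comm_ring_1 fps"
  assumes "f * (f oo - fps_X) = 1"
  shows "f ^ 2 = fps_odd_part f * f + fps_odd_part f * f + 1"
proof -
  have "fps_odd_part f * f + fps_odd_part f * f = (fps_odd_part f + fps_odd_part f) * f"
    by (simp only: distrib_right)
  also have "\<dots> = f * f - f * (f oo - fps_X)"
    by (simp only: fps_odd_part_double) (simp add: algebra_simps)
  finally have "fps_odd_part f * f + fps_odd_part f * f = f * f - f * (f oo - fps_X)" .
  then show ?thesis using assms by (simp add: power2_eq_square)
qed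

lemma exp_arsinh_compose_square:
  assumes "S $ 0 = 0"
  shows "(exp_arsinh oo S) ^ 2 = S * (exp_arsinh oo S) + S * (exp_arsinh oo S) + 1"
proof -
  have "(exp_arsinh oo S) ^ 2 = exp_arsinh ^ 2 oo S" by (rule fps_compose_power[OF assms])
  also have "\<dots> = S * (exp_arsinh oo S) + S * (exp_arsinh oo S) + 1"
    by (simp only: exp_arsinh_square fps_compose_add_distrib fps_compose_mult_distrib[OF assms]
        fps_X_fps_compose_startby0[OF assms] fps_compose_1)
  finally show ?thesis .
qed

lemma quadratic_fps_root_unique:
  fixes A B S :: "real fps"
  assumes A: "A ^ 2 = S * A + S * A + 1" and B: "B ^ 2 = S * B + S * B + 1"
    and "A $ 0 = 1" "B $ 0 = 1" "S $ 0 = 0"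
  shows "A = B"
proof -
  have "(A - B) * (A + B - S - S) = A ^ 2 - B ^ 2 - (S * A + S * A) + (S * B + S * B)"
    by (simp add: algebra_simps power2_eq_square)
  also have "\<dots> = 0" unfolding A B by simp
  finally have "(A - B) * (A + B - S - S) = 0" .
  moreover have "(A + B - S - S) $ 0 \<noteq> 0" using assms(3-5) by simp
  then have "A + B - S - S \<noteq> 0" by (metis fps_zero_nth)
  ultimately show ?thesis by simp
qed

text \<open>\<open>f(t) f(-t) = 1\<close> forces \<open>f\<^sup>2 = 2 S f + 1\<close> for the odd part \<open>S\<close> of \<open>f\<close>,
  so \<open>f = S + sqrt (1 + S\<^sup>2) = exp (arsinh S)\<close>.\<close>
theorem fps_eq_exp_arsinh_compose_odd_part:
  fixes f :: "real fps"
  assumes "f $ 0 = 1" "f * (f oo - fps_X) = 1"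
  shows "f = exp_arsinh oo fps_odd_part f"
  by (rule quadratic_fps_root_unique[OF fps_square_eq_odd_part[OF assms(2)]
        exp_arsinh_compose_square[OF fps_odd_part_nth_0]])
     (simp_all add: assms(1) exp_arsinh_nth_0)

section \<open>Odd compositions and odd partitions\<close>

definition odd_compositions :: "nat \<Rightarrow> nat list set" where
  "odd_compositions n = {xs. (\<forall>k\<in>set xs. odd k) \<and> sum_list xs = n}"

lemma odd_compositions_length_le:
  assumes "xs \<in> odd_compositions n"
  shows "length xs \<le> n"
proof -
  have "\<forall>k\<in>set xs. 1 \<le> k" using assms by (auto simp: odd_compositions_def odd_pos Suc_le_eq)
  then have "length xs \<le> sum_list xs" by (induction xs) auto
  then show ?thesis using assms by (simp add: odd_compositions_def)
qed

lemma finite_odd_compositions: "finite (odd_compositions n)"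
proof (rule finite_subset)
  show "odd_compositions n \<subseteq> {xs. set xs \<subseteq> {0..n} \<and> length xs \<le> n}"
    using odd_compositions_length_le member_le_sum_list by (fastforce simp: odd_compositions_def)
qed (rule finite_lists_length_le, simp)

lemma fps_odd_part_power_nth:
  assumes "i \<ge> 1"
  shows "(fps_odd_part f ^ i) $ n = (\<Sum>xs | xs \<in> odd_compositions n \<and> length xs = i. \<Prod>k\<leftarrow>xs. f $ k)"
proof -
  obtain m where m: "i = Suc m" using assms by (cases i) auto
  have prod: "(\<Prod>j = 0..m. fps_odd_part f $ (v ! j)) = (if \<forall>k\<in>set v. odd k then \<Prod>k\<leftarrow>v. f $ k else 0)"
    if "v \<in> natpermute n i" for v
  proof -
    have lv: "length v = i" using that by (simp add: natpermute_def)
    have "(\<Prod>j = 0..m. fps_odd_part f $ (v ! j)) = (\<Prod>k\<leftarrow>v. fps_odd_part f $ k)"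
      using lv m by (simp add: prod.list_conv_set_nth atLeastLessThanSuc_atLeastAtMost)
    also have "\<dots> = (if \<forall>k\<in>set v. odd k then \<Prod>k\<leftarrow>v. f $ k else 0)"
      by (induction v) (auto simp: fps_odd_part_def)
    finally show ?thesis .
  qed
  have "(fps_odd_part f ^ i) $ n = (\<Sum>v\<in>natpermute n (m + 1). \<Prod>j = 0..m. fps_odd_part f $ (v ! j))"
    unfolding m by (rule fps_power_nth_Suc)
  also have "\<dots> = (\<Sum>v\<in>natpermute n i. \<Prod>j = 0..m. fps_odd_part f $ (v ! j))"
    by (simp add: m)
  also have "\<dots> = (\<Sum>v | v \<in> natpermute n i \<and> (\<forall>k\<in>set v. odd k). \<Prod>k\<leftarrow>v. f $ k)"
    by (simp add: prod sum.inter_filter natpermute_finite)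
  also have "{v. v \<in> natpermute n i \<and> (\<forall>k\<in>set v. odd k)} = {xs. xs \<in> odd_compositions n \<and> length xs = i}"
    by (auto simp: natpermute_def odd_compositions_def)
  finally show ?thesis .
qed

theorem fps_power_nth_odd_compositions:
  fixes f :: "real fps"
  assumes f0: "f $ 0 = 1" and reflect: "f * (f oo - fps_X) = 1" and n: "n \<ge> 1"
  shows "(f ^ M) $ n = (\<Sum>xs\<in>odd_compositions n. exp_arsinh_power_coeff M (length xs) * (\<Prod>k\<leftarrow>xs. f $ k))"
proof -
  define S where "S = fps_odd_part f"
  have "f ^ M = (exp_arsinh oo S) ^ M"
    unfolding S_def using fps_eq_exp_arsinh_compose_odd_part[OF f0 reflect] by (rule arg_cong)
  also have "\<dots> = exp_arsinh ^ M oo S" by (rule fps_compose_power) (simp add: S_def)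
  finally have "(f ^ M) $ n = (\<Sum>i = 0..n. (exp_arsinh ^ M) $ i * (S ^ i) $ n)"
    by (simp only: fps_compose_nth)
  also have "\<dots> = (\<Sum>i = 1..n. (exp_arsinh ^ M) $ i * (S ^ i) $ n)"
    using n by (simp add: sum.atLeast_Suc_atMost)
  also have "\<dots> = (\<Sum>i = 1..n. \<Sum>xs | xs \<in> odd_compositions n \<and> length xs = i.
                    exp_arsinh_power_coeff M (length xs) * (\<Prod>k\<leftarrow>xs. f $ k))"
    by (intro sum.cong refl) (simp add: exp_arsinh_power_nth fps_odd_part_power_nth S_def sum_distrib_left)
  also have "\<dots> = (\<Sum>xs\<in>odd_compositions n. exp_arsinh_power_coeff M (length xs) * (\<Prod>k\<leftarrow>xs. f $ k))"
  proof (rule sum.group[OF finite_odd_compositions finite_atLeastAtMost])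
    show "length ` odd_compositions n \<subseteq> {1..n}"
      using n odd_compositions_length_le by (fastforce simp: odd_compositions_def Suc_le_eq)
  qed
  finally show ?thesis .
qed

lemma mset_in_odd_partitions_iff: "mset xs \<in> odd_partitions n \<longleftrightarrow> xs \<in> odd_compositions n"
  by (simp add: odd_partitions_def odd_compositions_def sum_mset_sum_list)

lemma sum_odd_compositions_mset:
  "(\<Sum>xs\<in>odd_compositions n. h (mset xs)) =
    (\<Sum>mu\<in>odd_partitions n. of_nat (card (permutations_of_multiset mu)) * h mu)"
proof -
  have img: "mset ` odd_compositions n = odd_partitions n"
    using mset_in_odd_partitions_iff ex_mset by (metis (mono_tags, lifting) image_iff subsetI subset_antisym)
  have fibre: "{xs \<in> odd_compositions n. mset xs = mu} = permutations_of_multiset mu"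
    if "mu \<in> odd_partitions n" for mu
    using that mset_in_odd_partitions_iff by (auto simp: permutations_of_multiset_def)
  have "finite (odd_partitions n)"
    unfolding img[symmetric] by (rule finite_imageI[OF finite_odd_compositions])
  then have "(\<Sum>xs\<in>odd_compositions n. h (mset xs)) =
      (\<Sum>mu\<in>odd_partitions n. \<Sum>xs | xs \<in> odd_compositions n \<and> mset xs = mu. h (mset xs))"
    by (intro sum.group[OF finite_odd_compositions, symmetric]) (use img in auto)
  also have "\<dots> = (\<Sum>mu\<in>odd_partitions n. of_nat (card (permutations_of_multiset mu)) * h mu)"
    by (intro sum.cong refl) (simp add: fibre permutations_of_multisetD)
  finally show ?thesis .
qed

lemma real_card_permutations_of_multiset:
  "real (card (permutations_of_multiset mu)) = fact (size mu) / (\<Prod>i\<in>set_mset mu. fact (count mu i))"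
  using real_of_nat_div[OF card_permutations_of_multiset(2)[of mu]]
  by (simp add: card_permutations_of_multiset(1) of_nat_prod)

lemma V_mset: "V (mset xs) N x = (\<Prod>k\<leftarrow>xs. schurP_gf N x $ k) / 2 ^ length xs"
  by (induction xs) (simp_all add: V_def schurP_def)

lemma exp_arsinh_power_coeff_Suc_div:
  "exp_arsinh_power_coeff (Suc n) l / real (Suc n) = (\<Prod>j<l - 1. real n + real l - 1 - 2 * real j) / fact l"
proof -
  have "(\<Prod>j<l - 1. real (Suc n) + real l - 2 - 2 * real j) = (\<Prod>j<l - 1. real n + real l - 1 - 2 * real j)"
    by (intro prod.cong) auto
  then show ?thesis by (simp add: exp_arsinh_power_coeff_def field_simps del: of_nat_Suc)
qed

theorem theorem3p4:
  fixes n N :: nat and x :: "nat \<Rightarrow> real"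
  assumes "n \<ge> 1"
  shows "SH n N x =
    (\<Sum>mu\<in>odd_partitions n.
       (2 ^ size mu / fact (size mu)) *
       (fact (size mu) / (\<Prod>i\<in>set_mset mu. fact (count mu i))) *
       (\<Prod>j<size mu - 1. real n + real (size mu) - 1 - 2 * real j) *
       V mu N x)"
proof -
  define g where "g mu = 2 ^ size mu / fact (size mu) *
    (\<Prod>j<size mu - 1. real n + real (size mu) - 1 - 2 * real j) * V mu N x" for mu
  have "SH n N x = (\<Sum>xs\<in>odd_compositions n. exp_arsinh_power_coeff (Suc n) (length xs) / real (Suc n) *
                      (\<Prod>k\<leftarrow>xs. schurP_gf N x $ k))"
    unfolding SH_eq_schurP_gf_power_nth[OF assms]
      fps_power_nth_odd_compositions[OF schurP_gf_nth_0 schurP_gf_reflect assms]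
    by (simp add: sum_divide_distrib)
  also have "\<dots> = (\<Sum>xs\<in>odd_compositions n. g (mset xs))"
    by (intro sum.cong refl) (simp add: g_def V_mset exp_arsinh_power_coeff_Suc_div del: of_nat_Suc)
  also have "\<dots> = (\<Sum>mu\<in>odd_partitions n. real (card (permutations_of_multiset mu)) * g mu)"
    by (rule sum_odd_compositions_mset)
  finally show ?thesis
    by (simp add: g_def real_card_permutations_of_multiset mult_ac)
qed

end
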